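(* Assume the standing hypotheses (H). Then $\frac{n+k-1}{3}$ is an integer.
   Context: A list assignment $L$ assigns to each vertex $v$ a set $L(v)$ of colors; an $L$-coloring is a proper coloring $f$ with $f(v)\in L(v)$ for all $v$; $\mathrm{ch}$ denotes choice number and $\chi$ chromatic number. A part of a complete multipartite graph is one of its maximal stable sets. Standing hypotheses (H): $k\ge1$ and $n\ge 2k+2$ are integers; $G$ is a complete $k$-partite graph (exactly $k$ nonempty parts) on $n$ vertices; $L$ is a list assignment for $G$ with $|L(v)|\ge\lceil (n+k-1)/3\rceil$ for every vertex $v$; $G$ has no $L$-coloring; $\left|\bigcup_{v\in V(G)}L(v)\right|\le n-1$; and every graph $H$ with fewer than $n$ vertices satisfies $\mathrm{ch}(H)\le\max\{\chi(H),\lceil(|V(H)|+\chi(H)-1)/3\rceil\}$. *)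

theory Defs
  imports Complex_Main "HOL-Library.Disjoint_Sets"
begin

definition simple_graph :: "'a set \<Rightarrow> ('a \<Rightarrow> 'a \<Rightarrow> bool) \<Rightarrow> bool" where
  "simple_graph V E \<longleftrightarrow> finite V \<and> (\<forall>u v. E u v \<longrightarrow> u \<in> V \<and> v \<in> V \<and> u \<noteq> v \<and> E v u)"

definition proper_coloring :: "'a set \<Rightarrow> ('a \<Rightarrow> 'a \<Rightarrow> bool) \<Rightarrow> ('a \<Rightarrow> 'c) \<Rightarrow> bool" where
  "proper_coloring V E f \<longleftrightarrow> (\<forall>u\<in>V. \<forall>v\<in>V. E u v \<longrightarrow> f u \<noteq> f v)"

definition L_coloring :: "'a set \<Rightarrow> ('a \<Rightarrow> 'a \<Rightarrow> bool) \<Rightarrow> ('a \<Rightarrow> 'c set) \<Rightarrow> ('a \<Rightarrow> 'c) \<Rightarrow> bool" where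
  "L_coloring V E L f \<longleftrightarrow> proper_coloring V E f \<and> (\<forall>v\<in>V. f v \<in> L v)"

definition chromatic_number :: "'a set \<Rightarrow> ('a \<Rightarrow> 'a \<Rightarrow> bool) \<Rightarrow> nat" where
  "chromatic_number V E = (LEAST m. \<exists>f :: 'a \<Rightarrow> nat. proper_coloring V E f \<and> f ` V \<subseteq> {..<m})"

definition choosable :: "'a set \<Rightarrow> ('a \<Rightarrow> 'a \<Rightarrow> bool) \<Rightarrow> nat \<Rightarrow> bool" where
  "choosable V E m \<longleftrightarrow> (\<forall>L :: 'a \<Rightarrow> nat set. (\<forall>v\<in>V. m \<le> card (L v)) \<longrightarrow> (\<exists>f. L_coloring V E L f))"

definition choice_number :: "'a set \<Rightarrow> ('a \<Rightarrow> 'a \<Rightarrow> bool) \<Rightarrow> nat" where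
  "choice_number V E = (LEAST m. choosable V E m)"

definition complete_multipartite :: "'a set \<Rightarrow> ('a \<Rightarrow> 'a \<Rightarrow> bool) \<Rightarrow> 'a set set \<Rightarrow> bool" where
  "complete_multipartite V E P \<longleftrightarrow> simple_graph V E \<and> partition_on V P \<and>
     (\<forall>u\<in>V. \<forall>v\<in>V. E u v \<longleftrightarrow> \<not> (\<exists>X\<in>P. u \<in> X \<and> v \<in> X))"

definition complete_k_partite :: "nat \<Rightarrow> 'a set \<Rightarrow> ('a \<Rightarrow> 'a \<Rightarrow> bool) \<Rightarrow> bool" where
  "complete_k_partite k V E \<longleftrightarrow> (\<exists>P. complete_multipartite V E P \<and> card P = k)"

end

theory Submission
  imports Defs
begin

text \<open>Suppose 3 does not divide n + k - 1 and put q = (n + k - 1) div 3, so that every list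
has at least q + 1 colours and k \<le> q. Let S be a nonempty set inside one part whose lists
share a colour c, with |V - S| + k - 1 \<le> 3q. The graph G - S is k-colourable, so the
minimality hypothesis makes it q-choosable; colouring it from the lists L v - {c} and giving
every vertex of S the colour c yields an L-colouring, a contradiction. Such an S exists: if
n + k - 1 = 3q + 1 take a single vertex; if n + k - 1 = 3q + 2, some part has three vertices
(as n > 2k), and since all lists together have fewer than 3(q + 1) colours, two of these
three lists meet.\<close>

lemma exists_inj_choice:
  assumes "finite W" and "\<forall>v\<in>W. card W \<le> card (L v)"
  shows "\<exists>f. inj_on f W \<and> (\<forall>v\<in>W. f v \<in> L v)"
  using assms
proof (induction W rule: finite_induct)
  case empty
  then show ?case by auto
next
  case (insert x W)
  then have "\<forall>v\<in>W. card W \<le> card (L v)" by auto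
  with insert.IH obtain f where f: "inj_on f W" "\<forall>v\<in>W. f v \<in> L v" by blast
  have "card (f ` W) < card (L x)"
    using insert card_image_le[of W f] by auto
  then obtain c where c: "c \<in> L x" "c \<notin> f ` W"
    by (metis card_mono finite_imageI insert.hyps(1) not_le subsetI)
  have "inj_on (f(x := c)) (insert x W)" "\<forall>v\<in>insert x W. (f(x := c)) v \<in> L v"
    using f c insert.hyps(2) by (auto simp: inj_on_def)
  then show ?case by blast
qed

lemma choosable_card:
  assumes "simple_graph W F"
  shows "choosable W F (card W)"
  unfolding choosable_def
proof (intro allI impI)
  fix L :: "_ \<Rightarrow> nat set"
  assume "\<forall>v\<in>W. card W \<le> card (L v)"
  moreover have "finite W" using assms by (simp add: simple_graph_def)
  ultimately obtain f where f: "inj_on f W" "\<forall>v\<in>W. f v \<in> L v"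
    using exists_inj_choice by blast
  then have "proper_coloring W F f"
    using assms unfolding proper_coloring_def by (metis simple_graph_def inj_onD)
  with f show "\<exists>f. L_coloring W F L f" by (auto simp: L_coloring_def)
qed

lemma choosable_mono:
  assumes "choosable W F a" and "a \<le> b"
  shows "choosable W F b"
  unfolding choosable_def
proof (intro allI impI)
  fix L :: "_ \<Rightarrow> nat set"
  assume L: "\<forall>v\<in>W. b \<le> card (L v)"
  have "\<exists>T. T \<subseteq> L v \<and> card T = a" if "v \<in> W" for v
    using L that assms(2) by (meson obtain_subset_with_card_n order_trans)
  then obtain L' where L': "\<forall>v\<in>W. L' v \<subseteq> L v \<and> card (L' v) = a" by metis
  then obtain f where "L_coloring W F L' f"
    using assms(1) unfolding choosable_def by (metis order_refl)
  with L' show "\<exists>f. L_coloring W F L f" unfolding L_coloring_def by blast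
qed

lemma choosable_of_choice_number_le:
  assumes "simple_graph W F" and "choice_number W F \<le> q"
  shows "choosable W F q"
proof -
  have "choosable W F (choice_number W F)"
    unfolding choice_number_def by (rule LeastI) (rule choosable_card[OF assms(1)])
  then show ?thesis using assms(2) by (rule choosable_mono)
qed

lemma chromatic_number_le:
  assumes "proper_coloring W F (g :: _ \<Rightarrow> nat)" and "g ` W \<subseteq> {..<k}"
  shows "chromatic_number W F \<le> k"
  unfolding chromatic_number_def by (rule Least_le) (use assms in blast)

lemma L_coloring_of_choosable:
  fixes L :: "'a \<Rightarrow> 'c set"
  assumes "finite V" and "choosable V E q"
    and "\<forall>v\<in>V. finite (L v) \<and> q \<le> card (L v)"
  shows "\<exists>f. L_coloring V E L f"
proof -
  \<comment> \<open>\<open>choosable\<close> only quantifies over lists of naturals, so encode the colours injectively\<close>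
  have "finite (\<Union>v\<in>V. L v)" using assms(1,3) by blast
  then obtain c :: "'c \<Rightarrow> nat" where c: "inj_on c (\<Union>v\<in>V. L v)"
    using finite_imp_inj_to_nat_seg by blast
  have "\<forall>v\<in>V. q \<le> card (c ` L v)"
  proof
    fix v assume "v \<in> V"
    then have "inj_on c (L v)" using c by (blast intro: inj_on_subset)
    with \<open>v \<in> V\<close> assms(3) show "q \<le> card (c ` L v)" by (simp add: card_image)
  qed
  then obtain f where f: "L_coloring V E (\<lambda>v. c ` L v) f"
    using assms(2)[unfolded choosable_def, rule_format, of "\<lambda>v. c ` L v"] by blast
  define f' where "f' v = inv_into (L v) c (f v)" for v
  have f': "f' v \<in> L v \<and> c (f' v) = f v" if "v \<in> V" for v
    using f that unfolding f'_def L_coloring_def by (auto intro: inv_into_into f_inv_into_f)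
  then have "proper_coloring V E f'"
    using f unfolding L_coloring_def proper_coloring_def by metis
  with f' show ?thesis unfolding L_coloring_def by blast
qed

definition graph_image :: "('a \<Rightarrow> 'b) \<Rightarrow> 'a set \<Rightarrow> ('a \<Rightarrow> 'a \<Rightarrow> bool) \<Rightarrow> 'b \<Rightarrow> 'b \<Rightarrow> bool" where
  "graph_image h V E a b \<longleftrightarrow> (\<exists>u\<in>V. \<exists>v\<in>V. a = h u \<and> b = h v \<and> E u v)"

lemma simple_graph_graph_image:
  assumes "simple_graph V0 E" and "V \<subseteq> V0" and "inj_on h V"
  shows "simple_graph (h ` V) (graph_image h V E)"
proof -
  have "finite V" using assms(1,2) finite_subset by (auto simp: simple_graph_def)
  moreover have "u \<in> V \<and> v \<in> V \<and> u \<noteq> v \<and> E v u" if "u \<in> V" "v \<in> V" "E u v" for u v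
    using assms(1,2) that by (auto simp: simple_graph_def)
  ultimately show ?thesis
    using assms(3) unfolding simple_graph_def graph_image_def by (blast dest: inj_onD)
qed

lemma proper_coloring_graph_image:
  assumes "inj_on h V" and "proper_coloring V E g"
  shows "proper_coloring (h ` V) (graph_image h V E) (g \<circ> inv_into V h)"
  using assms unfolding proper_coloring_def graph_image_def by (auto dest: inj_onD)

lemma choosable_of_choosable_graph_image:
  assumes "inj_on h V" and "choosable (h ` V) (graph_image h V E) q"
  shows "choosable V E q"
  unfolding choosable_def
proof (intro allI impI)
  fix L :: "_ \<Rightarrow> nat set"
  assume "\<forall>v\<in>V. q \<le> card (L v)"
  then have "\<forall>a\<in>h ` V. q \<le> card (L (inv_into V h a))"
    using assms(1) by auto
  then obtain f where f: "L_coloring (h ` V) (graph_image h V E) (L \<circ> inv_into V h) f"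
    using assms(2)[unfolded choosable_def, rule_format, of "L \<circ> inv_into V h"] by auto
  moreover have "graph_image h V E (h u) (h v)" if "u \<in> V" "v \<in> V" "E u v" for u v
    using that unfolding graph_image_def by blast
  ultimately have "L_coloring V E L (f \<circ> h)"
    using assms(1) unfolding L_coloring_def proper_coloring_def by auto
  then show "\<exists>f. L_coloring V E L f" by blast
qed

definition choice_bound_below :: "nat \<Rightarrow> bool" where
  "choice_bound_below n \<longleftrightarrow> (\<forall>(W :: nat set) F. simple_graph W F \<and> card W < n \<longrightarrow>
     choice_number W F \<le> max (chromatic_number W F)
       (nat \<lceil>(real (card W) + real (chromatic_number W F) - 1) / 3\<rceil>))"

lemma choice_bound_belowD:
  fixes W :: "nat set"
  assumes "choice_bound_below n" and "simple_graph W F" and "card W < n"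
  shows "choice_number W F \<le> max (chromatic_number W F)
           (nat \<lceil>(real (card W) + real (chromatic_number W F) - 1) / 3\<rceil>)"
  using assms unfolding choice_bound_below_def by blast

lemma choosable_of_choice_bound_below:
  fixes g :: "'a \<Rightarrow> nat"
  assumes "choice_bound_below n" and "simple_graph V0 E" and "V \<subseteq> V0" and "card V < n"
    and "proper_coloring V E g" and "g ` V \<subseteq> {..<k}" and "k \<le> q"
    and "real (card V) + real k - 1 \<le> 3 * real q"
  shows "choosable V E q"
proof -
  \<comment> \<open>the bound is only assumed for graphs on \<open>nat\<close>, so relabel the vertices injectively\<close>
  have "finite V" using assms(2,3) finite_subset by (auto simp: simple_graph_def)
  then obtain h :: "'a \<Rightarrow> nat" where h: "inj_on h V" using finite_imp_inj_to_nat_seg by blast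
  let ?W = "h ` V" and ?F = "graph_image h V E"
  have graph: "simple_graph ?W ?F" using assms(2,3) h by (rule simple_graph_graph_image)
  have card: "card ?W = card V" using h by (rule card_image)
  have "(g \<circ> inv_into V h) ` ?W \<subseteq> {..<k}" using assms(6) h by auto
  then have chi: "chromatic_number ?W ?F \<le> k"
    using chromatic_number_le proper_coloring_graph_image[OF h assms(5)] by blast
  then have "nat \<lceil>(real (card ?W) + real (chromatic_number ?W ?F) - 1) / 3\<rceil> \<le> q"
    using card assms(8) by (simp add: nat_ceiling_le_eq)
  moreover have "choice_number ?W ?F \<le> max (chromatic_number ?W ?F)
      (nat \<lceil>(real (card ?W) + real (chromatic_number ?W ?F) - 1) / 3\<rceil>)"
    using choice_bound_belowD[OF assms(1) graph] card assms(4) by simp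
  ultimately have "choice_number ?W ?F \<le> q" using chi assms(7) by linarith
  then show ?thesis
    using h choosable_of_choice_number_le[OF graph] by (blast intro: choosable_of_choosable_graph_image)
qed

lemma L_coloring_extend_stable:
  assumes "L_coloring (V - S) E (\<lambda>v. L v - {c}) f"
    and "\<forall>u\<in>S. \<forall>v\<in>S. \<not> E u v" and "\<forall>v\<in>S. c \<in> L v"
  shows "L_coloring V E L (\<lambda>v. if v \<in> S then c else f v)"
  using assms unfolding L_coloring_def proper_coloring_def by auto

lemma complete_multipartite_coloring:
  assumes "complete_multipartite V E P"
  shows "\<exists>g :: 'a \<Rightarrow> nat. proper_coloring V E g \<and> g ` V \<subseteq> {..<card P}"
proof -
  have part: "partition_on V P" and "finite V"
    using assms by (auto simp: complete_multipartite_def simple_graph_def)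
  then have "finite P" using finite_UnionD by (auto simp: partition_on_def)
  then obtain e where e: "bij_betw e P {0..<card P}" using ex_bij_betw_finite_nat by blast
  define part_of where "part_of v = (SOME X. X \<in> P \<and> v \<in> X)" for v
  have part_of: "part_of v \<in> P \<and> v \<in> part_of v" if "v \<in> V" for v
    using part that unfolding part_of_def partition_on_def by (metis (mono_tags, lifting) UnionE someI)
  have "proper_coloring V E (e \<circ> part_of)"
    unfolding proper_coloring_def
  proof (intro ballI impI)
    fix u v assume uv: "u \<in> V" "v \<in> V" "E u v"
    then have "part_of u \<noteq> part_of v"
      using assms part_of unfolding complete_multipartite_def by metis
    then show "(e \<circ> part_of) u \<noteq> (e \<circ> part_of) v"
      using e part_of uv by (auto simp: bij_betw_def dest: inj_onD)
  qed
  moreover have "(e \<circ> part_of) ` V \<subseteq> {..<card P}"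
    using e part_of by (auto simp: bij_betw_def)
  ultimately show ?thesis by blast
qed

lemma partition_on_large_part:
  assumes "partition_on V P" and "finite V" and "card P * b < card V"
  shows "\<exists>X\<in>P. b < card X"
proof (rule ccontr)
  assume "\<not> ?thesis"
  then have "\<forall>X\<in>P. card X \<le> b" by auto
  then have "sum card P \<le> card P * b" using sum_bounded_above[of P card b] by simp
  moreover have "card V \<le> sum card P"
    using assms(1) card_Union_le_sum_card by (auto simp: partition_on_def)
  ultimately show False using assms(3) by linarith
qed

lemma lists_intersect_of_card_Union_less:
  assumes "finite T" and "\<forall>v\<in>T. finite (L v)" and "card (\<Union>v\<in>T. L v) < (\<Sum>v\<in>T. card (L v))"
  shows "\<exists>x\<in>T. \<exists>y\<in>T. x \<noteq> y \<and> L x \<inter> L y \<noteq> {}"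
  using card_UN_disjoint[OF assms(1,2)] assms(3) by auto

lemma nat_ceiling_third:
  assumes "\<not> 3 dvd N"
  shows "nat \<lceil>real N / 3\<rceil> = N div 3 + 1"
proof -
  have floor: "\<lfloor>real N / 3\<rfloor> = int (N div 3)"
    using floor_divide_of_nat_eq[of N 3] by simp
  have "real N / 3 \<noteq> of_int \<lfloor>real N / 3\<rfloor>"
  proof
    assume "real N / 3 = of_int \<lfloor>real N / 3\<rfloor>"
    then have "real N = real (3 * (N div 3))" by (simp add: floor field_simps)
    then have "N = 3 * (N div 3)" by (simp only: of_nat_eq_iff)
    with assms show False by (metis dvd_triv_left)
  qed
  then show ?thesis by (simp add: ceiling_altdef floor nat_add_distrib)
qed

lemma L_colorable_of_stable_common_color:
  fixes L :: "'a \<Rightarrow> 'c set"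
  assumes "choice_bound_below n" and "complete_multipartite V E P" and "card V = n"
    and "\<forall>v\<in>V. finite (L v) \<and> q + 1 \<le> card (L v)" and "card P \<le> q"
    and "X \<in> P" and "S \<subseteq> X" and "S \<noteq> {}" and "\<forall>v\<in>S. c \<in> L v"
    and "card (V - S) + card P \<le> 3 * q + 1"
  shows "\<exists>f. L_coloring V E L f"
proof -
  note multipartite = assms(2)[unfolded complete_multipartite_def]
  have graph: "simple_graph V E" and part: "partition_on V P"
    and adj: "\<forall>u\<in>V. \<forall>v\<in>V. E u v \<longleftrightarrow> \<not> (\<exists>X\<in>P. u \<in> X \<and> v \<in> X)"
    using multipartite by simp_all
  have "finite V" using graph by (simp add: simple_graph_def)
  have "S \<subseteq> V" using partition_onD1[OF part] assms(6,7) by blast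
  then have "V - S \<subset> V" using assms(8) by blast
  then have "card (V - S) < n" using psubset_card_mono[OF \<open>finite V\<close>] assms(3) by blast
  obtain g :: "'a \<Rightarrow> nat" where g: "proper_coloring V E g" "g ` V \<subseteq> {..<card P}"
    using complete_multipartite_coloring[OF assms(2)] by blast
  have "choosable (V - S) E q"
  proof (rule choosable_of_choice_bound_below[OF assms(1) graph Diff_subset \<open>card (V - S) < n\<close>])
    show "proper_coloring (V - S) E g" using g(1) by (auto simp: proper_coloring_def)
    show "g ` (V - S) \<subseteq> {..<card P}" using g(2) by auto
    show "card P \<le> q" by (rule assms(5))
    show "real (card (V - S)) + real (card P) - 1 \<le> 3 * real q" using assms(10) by linarith
  qed
  moreover have "\<forall>v\<in>V - S. finite (L v - {c}) \<and> q \<le> card (L v - {c})"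
  proof
    fix v assume "v \<in> V - S"
    then have "finite (L v)" "q + 1 \<le> card (L v)" using assms(4) by auto
    moreover have "card (L v) - 1 \<le> card (L v - {c})"
      using diff_card_le_card_Diff[of "{c}" "L v"] by simp
    ultimately show "finite (L v - {c}) \<and> q \<le> card (L v - {c})" by simp
  qed
  ultimately obtain f where f: "L_coloring (V - S) E (\<lambda>v. L v - {c}) f"
    using L_coloring_of_choosable[of "V - S" E q "\<lambda>v. L v - {c}"] \<open>finite V\<close> by blast
  have "\<forall>u\<in>S. \<forall>v\<in>S. \<not> E u v"
  proof (intro ballI)
    fix u v assume "u \<in> S" "v \<in> S"
    then have "u \<in> V" "v \<in> V" "u \<in> X" "v \<in> X" using \<open>S \<subseteq> V\<close> assms(7) by auto
    then show "\<not> E u v" using adj[rule_format, of u v] assms(6) by blast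
  qed
  from L_coloring_extend_stable[OF f this assms(9)] show ?thesis by blast
qed

lemma two_vertices_common_color:
  assumes "partition_on V P" and "finite V" and "2 * card P < card V"
    and "\<forall>v\<in>V. finite (L v) \<and> m \<le> card (L v)" and "card (\<Union>v\<in>V. L v) < 3 * m"
  shows "\<exists>X\<in>P. \<exists>x\<in>X. \<exists>y\<in>X. x \<noteq> y \<and> L x \<inter> L y \<noteq> {}"
proof -
  obtain X where X: "X \<in> P" "3 \<le> card X"
    using partition_on_large_part[OF assms(1,2), of 2] assms(3) by (auto simp: mult.commute)
  then obtain T where T: "T \<subseteq> X" "card T = 3" using obtain_subset_with_card_n by blast
  then have "T \<subseteq> V" "finite T" using partition_onD1[OF assms(1)] X(1) by (auto simp: card_ge_0_finite)
  then have "card (\<Union>v\<in>T. L v) \<le> card (\<Union>v\<in>V. L v)"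
    using assms(2,4) by (intro card_mono) auto
  also have "\<dots> < 3 * m" by (rule assms(5))
  also have "3 * m \<le> (\<Sum>v\<in>T. card (L v))"
    using sum_bounded_below[of T m "\<lambda>v. card (L v)"] assms(4) \<open>T \<subseteq> V\<close> T(2) by auto
  finally obtain x y where "x \<in> T" "y \<in> T" "x \<noteq> y" "L x \<inter> L y \<noteq> {}"
    using lists_intersect_of_card_Union_less[of T L] \<open>finite T\<close> \<open>T \<subseteq> V\<close> assms(4) by blast
  then show ?thesis using X(1) T(1) by blast
qed

lemma exists_stable_set_common_color:
  fixes L :: "'a \<Rightarrow> 'c set"
  assumes "partition_on V P" and "finite V" and "card V = n" and "card P = k"
    and "2 * k + 2 \<le> n" and "\<not> 3 dvd (n + k - 1)"
    and "\<forall>v\<in>V. finite (L v) \<and> (n + k - 1) div 3 + 1 \<le> card (L v)"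
    and "card (\<Union>v\<in>V. L v) \<le> n - 1"
  shows "\<exists>X\<in>P. \<exists>S\<subseteq>X. S \<noteq> {} \<and> (\<exists>c. \<forall>v\<in>S. c \<in> L v)
           \<and> card (V - S) + k \<le> 3 * ((n + k - 1) div 3) + 1"
proof -
  define q where "q = (n + k - 1) div 3"
  have "(n + k - 1) mod 3 \<noteq> 0" "(n + k - 1) mod 3 < 3"
    using assms(6) by (simp_all add: dvd_eq_mod_eq_0)
  moreover have "n + k - 1 = 3 * q + (n + k - 1) mod 3" unfolding q_def by simp
  ultimately consider (one) "n + k - 1 = 3 * q + 1" | (two) "n + k - 1 = 3 * q + 2" by arith
  then show ?thesis
  proof cases
    case one
    have "V \<noteq> {}" using assms(3,5) by auto
    then obtain v where "v \<in> V" by blast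
    then obtain X where "X \<in> P" "v \<in> X" using partition_onD1[OF assms(1)] by blast
    moreover have "L v \<noteq> {}" using assms(7) \<open>v \<in> V\<close> by auto
    then obtain c where "c \<in> L v" by blast
    moreover have "card (V - {v}) = n - 1" using \<open>v \<in> V\<close> assms(2,3) by simp
    then have "card (V - {v}) + k \<le> 3 * q + 1" using one assms(5) by linarith
    ultimately show ?thesis unfolding q_def[symmetric] by (intro bexI[of _ X] exI[of _ "{v}"]) auto
  next
    case two
    have "card (\<Union>v\<in>V. L v) < 3 * (q + 1)" using assms(8) two by arith
    then obtain X x y where X: "X \<in> P" "x \<in> X" "y \<in> X" "x \<noteq> y" "L x \<inter> L y \<noteq> {}"
      using two_vertices_common_color[OF assms(1,2) _ assms(7)[folded q_def]] assms(3-5) by auto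
    then obtain c where "\<forall>v\<in>{x, y}. c \<in> L v" by blast
    moreover have "{x, y} \<subseteq> V" using X partition_onD1[OF assms(1)] by blast
    then have "card (V - {x, y}) = n - 2" using X(4) assms(2,3) by (simp add: card_Diff_subset)
    then have "card (V - {x, y}) + k \<le> 3 * q + 1" using two assms(5) by linarith
    ultimately show ?thesis unfolding q_def[symmetric] using X by (intro bexI[of _ X] exI[of _ "{x, y}"]) auto
  qed
qed

theorem lemma14:
  fixes V :: "'a set" and E :: "'a \<Rightarrow> 'a \<Rightarrow> bool" and L :: "'a \<Rightarrow> 'c set"
    and n k :: nat
  assumes "k \<ge> 1" and "n \<ge> 2 * k + 2"
    and "complete_k_partite k V E" and "card V = n"
    and "\<forall>v\<in>V. nat \<lceil>(real n + real k - 1) / 3\<rceil> \<le> card (L v)"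
    and "\<not> (\<exists>f. L_coloring V E L f)"
    and "card (\<Union>v\<in>V. L v) \<le> n - 1"
    and "\<forall>(W :: nat set) F. simple_graph W F \<and> card W < n \<longrightarrow>
           choice_number W F \<le> max (chromatic_number W F)
             (nat \<lceil>(real (card W) + real (chromatic_number W F) - 1) / 3\<rceil>)"
  shows "3 dvd (n + k - 1)"
proof (rule ccontr)
  assume not_dvd: "\<not> 3 dvd (n + k - 1)"
  define q where "q = (n + k - 1) div 3"
  have "nat \<lceil>(real n + real k - 1) / 3\<rceil> = q + 1"
    using nat_ceiling_third[OF not_dvd] assms(1) by (simp add: q_def of_nat_diff)
  have lists: "\<forall>v\<in>V. finite (L v) \<and> q + 1 \<le> card (L v)"
  proof
    fix v assume "v \<in> V"
    with assms(5) \<open>nat \<lceil>(real n + real k - 1) / 3\<rceil> = q + 1\<close> have "q + 1 \<le> card (L v)" by simp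
    then show "finite (L v) \<and> q + 1 \<le> card (L v)" using card_ge_0_finite[of "L v"] by simp
  qed
  obtain P where P: "complete_multipartite V E P" "card P = k"
    using assms(3) unfolding complete_k_partite_def by blast
  then have part: "partition_on V P" and "finite V"
    by (simp_all add: complete_multipartite_def simple_graph_def)
  obtain X S c where stable: "X \<in> P" "S \<subseteq> X" "S \<noteq> {}" "\<forall>v\<in>S. c \<in> L v"
      "card (V - S) + k \<le> 3 * q + 1"
    using exists_stable_set_common_color[OF part \<open>finite V\<close> assms(4) P(2) assms(2) not_dvd
        lists[unfolded q_def] assms(7)]
    unfolding q_def by blast
  have "k \<le> q" using assms(2) unfolding q_def by (simp add: less_eq_div_iff_mult_less_eq)
  have "choice_bound_below n" using assms(8) unfolding choice_bound_below_def .
  then have "\<exists>f. L_coloring V E L f"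
    using L_colorable_of_stable_common_color[OF _ P(1) assms(4) lists _ stable(1-4)]
      P(2) \<open>k \<le> q\<close> stable(5) by simp
  with assms(6) show False ..
qed

end
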